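(* Let $n\ge2$, $(a,b)\in\Omega_n$ and $L=L^{(n)}_{(a,b)}$. Then (i) $\mathrm{Orb}(L,\omega^a)=\mathrm{Orb}(L,1)$ if and only if $n/a$ is odd; (ii) $\mathrm{Orb}(L,\omega^bj)=\mathrm{Orb}(L,j)$ if and only if $n/b$ is odd. In particular, $L$ (which is the union of $\mathrm{Orb}(L,1),\mathrm{Orb}(L,\omega^a),\mathrm{Orb}(L,j),\mathrm{Orb}(L,\omega^bj)$) can have two, three or four orbits.
   Context: $\mathbb{H}$ is the real quaternion algebra with basis $1,i,j,k$. For $n\ge2$ let $\omega:=\cos(\pi/n)+i\sin(\pi/n)\in\mathbb{H}$ and $\mathcal{D}_n:=\langle\omega,j\rangle$ (dicyclic group of order $4n$). $\Omega_n:=\{(a,b):1\le a\le b\le n,\ a\mid n,\ b\mid n,\ \gcd(a,b)=1\}$. For $x,y$ in a group put $x\circ y:=xy^{-1}x$; $L(X)$ is the closure of a set $X$ under $\circ$; $L^{(n)}_{(a,b)}:=L(\{1,\omega^a,j,\omega^bj\})$. For $b\in L$, the orbit $\mathrm{Orb}(L,b)$ is the closure of $\{b\}$ under all maps $x\mapsto a\circ x=ax^{-1}a$ with $a\in L$. *)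

theory Defs
  imports Complex_Main
begin

text \<open>The real quaternion algebra H, with basis 1, i, j, k (Hamilton's rules
  i^2 = j^2 = k^2 = ijk = -1).\<close>

datatype quat = Quat (qRe: real) (qI: real) (qJ: real) (qK: real)

definition qmult :: "quat \<Rightarrow> quat \<Rightarrow> quat" where
  "qmult x y = Quat
     (qRe x * qRe y - qI x * qI y - qJ x * qJ y - qK x * qK y)
     (qRe x * qI y + qI x * qRe y + qJ x * qK y - qK x * qJ y)
     (qRe x * qJ y - qI x * qK y + qJ x * qRe y + qK x * qI y)
     (qRe x * qK y + qI x * qJ y - qJ x * qI y + qK x * qRe y)"

definition qnorm2 :: "quat \<Rightarrow> real" where
  "qnorm2 x = (qRe x)\<^sup>2 + (qI x)\<^sup>2 + (qJ x)\<^sup>2 + (qK x)\<^sup>2"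

definition qinv :: "quat \<Rightarrow> quat" where
  "qinv x = Quat (qRe x / qnorm2 x) (- qI x / qnorm2 x) (- qJ x / qnorm2 x) (- qK x / qnorm2 x)"

definition qone :: quat where "qone = Quat 1 0 0 0"
definition qj :: quat where "qj = Quat 0 0 1 0"

definition qpow :: "quat \<Rightarrow> nat \<Rightarrow> quat" where
  "qpow x m = (qmult x ^^ m) qone"

definition omega :: "nat \<Rightarrow> quat" where
  "omega n = Quat (cos (pi / real n)) (sin (pi / real n)) 0 0"

definition qcirc :: "quat \<Rightarrow> quat \<Rightarrow> quat" where
  "qcirc x y = qmult (qmult x (qinv y)) x"

inductive_set Lclos :: "quat set \<Rightarrow> quat set" for X :: "quat set" where
  base: "x \<in> X \<Longrightarrow> x \<in> Lclos X"
| circ: "x \<in> Lclos X \<Longrightarrow> y \<in> Lclos X \<Longrightarrow> qcirc x y \<in> Lclos X"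

inductive_set Orb :: "quat set \<Rightarrow> quat \<Rightarrow> quat set" for L :: "quat set" and b :: quat where
  self: "b \<in> Orb L b"
| step: "a \<in> L \<Longrightarrow> x \<in> Orb L b \<Longrightarrow> qcirc a x \<in> Orb L b"

definition Omega :: "nat \<Rightarrow> (nat \<times> nat) set" where
  "Omega n = {(a, b). 1 \<le> a \<and> a \<le> b \<and> b \<le> n \<and> a dvd n \<and> b dvd n \<and> gcd a b = 1}"

definition Lab :: "nat \<Rightarrow> nat \<Rightarrow> nat \<Rightarrow> quat set" where
  "Lab n a b = Lclos {qone, qpow (omega n) a, qj, qmult (qpow (omega n) b) qj}"

end

theory Submission
  imports Defs
begin

text \<open>Every element of the dicyclic group is \<open>\<omega>\<^sup>k\<close> or \<open>\<omega>\<^sup>k j\<close>, and \<open>x \<circ> y\<close> has the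
  same type as \<open>y\<close>: if \<open>x\<close> and \<open>y\<close> have the same type, with exponents \<open>p\<close> and \<open>q\<close>, the
  exponent of \<open>x \<circ> y\<close> is \<open>2p - q\<close>, otherwise it is \<open>q + n\<close> (as \<open>\<omega>\<^sup>n = -1\<close>).  Hence
  \<open>L\<close> consists of the \<open>\<omega>\<^sup>k\<close> with \<open>a | k\<close> and the \<open>\<omega>\<^sup>k j\<close> with \<open>b | k\<close>, and within
  the orbit of an element of spacing \<open>d \<in> {a, b}\<close> the exponent moves exactly by
  multiples of \<open>2d\<close> and by \<open>n\<close>.  So the orbits of exponent \<open>0\<close> and \<open>d\<close> coincide iff
  \<open>n \<equiv> d (mod 2d)\<close>, i.e. iff \<open>n/d\<close> is odd, while orbits of different type never
  meet; this leaves two, three or four orbits.\<close>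

lemma Lclos_minimal:
  assumes "X \<subseteq> S" and "\<And>x y. x \<in> S \<Longrightarrow> y \<in> S \<Longrightarrow> qcirc x y \<in> S"
  shows "Lclos X \<subseteq> S"
proof
  fix x assume "x \<in> Lclos X"
  then show "x \<in> S" by induction (use assms in auto)
qed

lemma Orb_minimal:
  assumes "b \<in> S" and "\<And>a x. a \<in> L \<Longrightarrow> x \<in> S \<Longrightarrow> qcirc a x \<in> S"
  shows "Orb L b \<subseteq> S"
proof
  fix x assume "x \<in> Orb L b"
  then show "x \<in> S" by induction (use assms in auto)
qed

lemma Orb_subset_Orb: "y \<in> Orb L x \<Longrightarrow> Orb L y \<subseteq> Orb L x"
  by (rule Orb_minimal) (auto intro: Orb.step)

lemma card_two_pairs:
  assumes "{A, B} \<inter> {C, D} = {}"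
  shows "card {A, B, C, D} \<in> {2, 3, 4}"
  using assms by (cases "A = B"; cases "C = D"; auto simp: card_insert_if)

definition qcis :: "bool \<Rightarrow> real \<Rightarrow> quat" where
  "qcis t \<theta> = (if t then Quat 0 0 (cos \<theta>) (sin \<theta>) else Quat (cos \<theta>) (sin \<theta>) 0 0)"

lemma qmult_qcis:
  "qmult (qcis u \<alpha>) (qcis t \<beta>)
    = qcis (u \<noteq> t) (\<alpha> + (if u then - \<beta> else \<beta>) + (if u \<and> t then pi else 0))"
  by (cases u; cases t) (simp_all add: qcis_def qmult_def cos_add sin_add cos_diff sin_diff)

lemma qinv_qcis: "qinv (qcis t \<theta>) = qcis t (if t then \<theta> + pi else - \<theta>)"
  by (cases t) (simp_all add: qcis_def qinv_def qnorm2_def)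

lemma qcirc_qcis:
  "qcirc (qcis u \<alpha>) (qcis t \<beta>) = qcis t (if u = t then 2 * \<alpha> - \<beta> else \<beta> + pi)"
  by (cases u; cases t) (simp_all add: qcirc_def qmult_qcis qinv_qcis algebra_simps)

text \<open>\<open>dic n False k = \<omega>\<^sup>k\<close> and \<open>dic n True k = \<omega>\<^sup>k j\<close>; the exponent only matters
  modulo \<open>2n\<close>.\<close>

definition dic :: "nat \<Rightarrow> bool \<Rightarrow> int \<Rightarrow> quat" where
  "dic n t k = qcis t (of_int k * pi / real n)"

lemma qcirc_dic:
  assumes "n > 0"
  shows "qcirc (dic n u p) (dic n t q) = dic n t (if u = t then 2 * p - q else q + int n)"
  using assms by (simp add: dic_def qcirc_qcis field_simps)

lemma dic_inject:
  assumes "n > 0" and "dic n t k = dic n u m"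
  shows "t = u \<and> int (2 * n) dvd k - m"
proof -
  let ?\<alpha> = "of_int k * pi / real n" and ?\<beta> = "of_int m * pi / real n"
  have "t = u"
  proof (rule ccontr)
    assume "t \<noteq> u"
    then have "cos ?\<alpha> = 0 \<and> sin ?\<alpha> = 0"
      using assms(2) by (cases t) (auto simp: dic_def qcis_def)
    then show False using sin_cos_squared_add[of ?\<alpha>] by simp
  qed
  moreover have "cos ?\<alpha> = cos ?\<beta> \<and> sin ?\<alpha> = sin ?\<beta>"
    using assms(2) by (cases t; cases u) (simp_all add: dic_def qcis_def)
  then have "cos (?\<alpha> - ?\<beta>) = 1" by (simp add: cos_diff)
  then obtain j :: int where "?\<alpha> - ?\<beta> = of_int j * 2 * pi" using cos_one_2pi_int by blast
  then have "pi * real_of_int (k - m) = pi * real_of_int (j * 2 * int n)"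
    using assms(1) by (simp add: field_simps)
  then have "k - m = int (2 * n) * j" by (simp only: mult_cancel_left of_int_eq_iff) simp
  ultimately show ?thesis by simp
qed

lemma qpow_omega: "qpow (omega n) k = dic n False (int k)"
proof (induction k)
  case 0
  then show ?case by (simp add: qpow_def qone_def dic_def qcis_def)
next
  case (Suc k)
  have "omega n = dic n False 1" by (simp add: omega_def dic_def qcis_def)
  with Suc show ?case by (simp add: qpow_def qmult_qcis dic_def add_divide_distrib distrib_right)
qed

lemma generators_eq_dic:
  "qone = dic n False 0" "qpow (omega n) a = dic n False (int a)" "qj = dic n True 0"
  "qmult (qpow (omega n) b) qj = dic n True (int b)"
  by (simp_all add: qone_def qj_def qpow_omega dic_def qcis_def qmult_def)

definition spacing :: "nat \<Rightarrow> nat \<Rightarrow> bool \<Rightarrow> nat" where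
  "spacing a b t = (if t then b else a)"

definition dic_lattice :: "nat \<Rightarrow> nat \<Rightarrow> nat \<Rightarrow> quat set" where
  "dic_lattice n a b = {dic n t k |t k. int (spacing a b t) dvd k}"

lemma dic_in_dic_lattice: "int (spacing a b t) dvd k \<Longrightarrow> dic n t k \<in> dic_lattice n a b"
  unfolding dic_lattice_def by blast

locale Lab_orbits =
  fixes n a b :: nat
  assumes n_pos: "0 < n" and a_dvd: "a dvd n" and b_dvd: "b dvd n"
begin

abbreviation L :: "quat set" where "L \<equiv> Lab n a b"
abbreviation d :: "bool \<Rightarrow> nat" where "d \<equiv> spacing a b"

lemma d_pos: "0 < d t" and d_dvd: "d t dvd n"
  using n_pos a_dvd b_dvd by (auto simp: spacing_def intro: Nat.gr0I)

lemma Lab_eq_Lclos_dic: "L = Lclos {dic n False 0, dic n False (int a), dic n True 0, dic n True (int b)}"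
  unfolding Lab_def generators_eq_dic(4) unfolding generators_eq_dic(1-3)[where n = n] ..

lemma dic_in_Lab: "dic n t 0 \<in> L" "dic n t (d t) \<in> L"
  unfolding Lab_eq_Lclos_dic by (cases t; auto simp: spacing_def intro: Lclos.base)+

lemma Lab_subset_dic_lattice: "L \<subseteq> dic_lattice n a b"
  unfolding Lab_eq_Lclos_dic
proof (rule Lclos_minimal)
  show "{dic n False 0, dic n False (int a), dic n True 0, dic n True (int b)} \<subseteq> dic_lattice n a b"
    by (simp add: dic_in_dic_lattice spacing_def)
next
  fix x y assume "x \<in> dic_lattice n a b" "y \<in> dic_lattice n a b"
  then obtain u p t q where "x = dic n u p" "int (d u) dvd p" "y = dic n t q" "int (d t) dvd q"
    by (auto simp: dic_lattice_def)
  moreover have "int (d t) dvd int n" using d_dvd by simp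
  ultimately show "qcirc x y \<in> dic_lattice n a b"
    by (auto simp: qcirc_dic n_pos dic_in_dic_lattice)
qed

lemma Orb_dic_subset:
  assumes "P k\<^sub>0"
    and "\<And>k p. P k \<Longrightarrow> int (d t) dvd p \<Longrightarrow> P (2 * p - k)"
    and "\<And>k. P k \<Longrightarrow> P (k + int n)"
  shows "Orb L (dic n t k\<^sub>0) \<subseteq> dic n t ` Collect P"
proof (rule Orb_minimal)
  fix l x assume "l \<in> L" "x \<in> dic n t ` Collect P"
  then obtain u p k where "l = dic n u p" "int (d u) dvd p" "x = dic n t k" "P k"
    using Lab_subset_dic_lattice by (auto simp: dic_lattice_def)
  then show "qcirc l x \<in> dic n t ` Collect P"
    using assms by (cases "u = t") (auto simp: qcirc_dic n_pos)
qed (use assms in simp)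

lemma dic_add_in_Orb:
  fixes s :: int
  assumes "dic n t k \<in> Orb L y"
  shows "dic n t (k + 2 * int (d t) * s) \<in> Orb L y"
proof (induction s rule: int_induct[where k = 0])
  case base
  then show ?case using assms by simp
next
  case (step1 i)
  have "qcirc (dic n t (d t)) (qcirc (dic n t 0) (dic n t (k + 2 * int (d t) * i))) \<in> Orb L y"
    using step1 dic_in_Lab by (intro Orb.step)
  then show ?case by (simp add: qcirc_dic n_pos algebra_simps)
next
  case (step2 i)
  have "qcirc (dic n t 0) (qcirc (dic n t (d t)) (dic n t (k + 2 * int (d t) * i))) \<in> Orb L y"
    using step2 dic_in_Lab by (intro Orb.step)
  then show ?case by (simp add: qcirc_dic n_pos algebra_simps)
qed

lemma dic_add_n_in_Orb:
  assumes "dic n t k \<in> Orb L y"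
  shows "dic n t (k + int n) \<in> Orb L y"
proof -
  have "qcirc (dic n (\<not> t) 0) (dic n t k) \<in> Orb L y"
    using assms dic_in_Lab by (intro Orb.step)
  then show ?thesis by (simp add: qcirc_dic n_pos)
qed

lemma Orb_dic_spacing_eq_iff: "Orb L (dic n t (d t)) = Orb L (dic n t 0) \<longleftrightarrow> odd (n div d t)"
proof
  assume eq: "Orb L (dic n t (d t)) = Orb L (dic n t 0)"
  show "odd (n div d t)"
  proof
    assume "even (n div d t)"
    then obtain s where "n div d t = 2 * s" by (auto elim: evenE)
    then have "n = 2 * d t * s" using d_dvd by (metis dvd_mult_div_cancel mult.left_commute mult.assoc)
    then have "int (2 * d t) dvd int n" by simp
    then have "Orb L (dic n t 0) \<subseteq> dic n t ` {k. int (2 * d t) dvd k}"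
      by (intro Orb_dic_subset) auto
    moreover have "dic n t (d t) \<in> Orb L (dic n t 0)" using eq Orb.self by metis
    ultimately obtain k where k: "dic n t (d t) = dic n t k" "int (2 * d t) dvd k" by blast
    have "int (2 * d t) dvd int (2 * n)" using d_dvd by simp
    moreover have "int (2 * n) dvd int (d t) - k" using dic_inject[OF n_pos k(1)] by blast
    ultimately have "int (2 * d t) dvd int (d t) - k + k" using k(2) by (blast intro: dvd_add dvd_trans)
    then have "2 * d t dvd d t" by (simp only: diff_add_cancel of_nat_dvd_iff)
    then show False using d_pos[of t] by (auto dest: dvd_imp_le)
  qed
next
  assume "odd (n div d t)"
  then obtain s where "n div d t = 2 * s + 1" by (auto elim: oddE)
  then have "n = d t * (2 * s + 1)" using d_dvd by (metis dvd_mult_div_cancel)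
  then have n_eq: "int n = int (d t) * (2 * int s + 1)" by (simp add: algebra_simps)
  have "dic n t (0 + int n + 2 * int (d t) * (- s)) \<in> Orb L (dic n t 0)"
    by (intro dic_add_in_Orb dic_add_n_in_Orb) (simp add: Orb.self)
  then have "dic n t (d t) \<in> Orb L (dic n t 0)" using n_eq by (simp add: algebra_simps)
  moreover have "dic n t (d t + int n + 2 * int (d t) * (- s - 1)) \<in> Orb L (dic n t (d t))"
    by (intro dic_add_in_Orb dic_add_n_in_Orb) (rule Orb.self)
  then have "dic n t 0 \<in> Orb L (dic n t (d t))" using n_eq by (simp add: algebra_simps)
  ultimately show "Orb L (dic n t (d t)) = Orb L (dic n t 0)"
    using Orb_subset_Orb by blast
qed

lemma Orb_dic_neq:
  assumes "u \<noteq> t"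
  shows "Orb L (dic n u p) \<noteq> Orb L (dic n t q)"
proof
  assume "Orb L (dic n u p) = Orb L (dic n t q)"
  then have "dic n u p \<in> Orb L (dic n t q)" by (metis Orb.self)
  moreover have "Orb L (dic n t q) \<subseteq> range (dic n t)"
    using Orb_dic_subset[where P = "\<lambda>_. True"] by simp
  ultimately show False using assms dic_inject n_pos by blast
qed

lemma Lab_eq_Un_Orb:
  "L = Orb L (dic n False 0) \<union> Orb L (dic n False a) \<union> Orb L (dic n True 0) \<union> Orb L (dic n True b)"
  (is "L = ?U")
proof
  show "L \<subseteq> ?U"
  proof
    fix x assume "x \<in> L"
    then obtain t m where x: "x = dic n t (int (d t) * m)"
      using Lab_subset_dic_lattice by (auto simp: dic_lattice_def elim!: dvdE)
    have "x \<in> Orb L (dic n t 0) \<union> Orb L (dic n t (d t))"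
    proof (cases "even m")
      case True
      then obtain s where "m = 2 * s" by (auto elim: evenE)
      then have "x = dic n t (0 + 2 * int (d t) * s)" using x by (simp add: ac_simps)
      then show ?thesis using dic_add_in_Orb Orb.self by blast
    next
      case False
      then obtain s where "m = 2 * s + 1" by (auto elim: oddE)
      then have "x = dic n t (d t + 2 * int (d t) * s)" using x by (simp add: algebra_simps)
      then show ?thesis using dic_add_in_Orb Orb.self by blast
    qed
    then show "x \<in> ?U"
      by (cases t) (auto simp: spacing_def)
  qed
next
  have Orb_subset_L: "Orb L x \<subseteq> L" if "x \<in> L" for x
    using that by (intro Orb_minimal) (auto intro: Lclos.circ simp: Lab_def)
  show "?U \<subseteq> L"
    using dic_in_Lab[of False] dic_in_Lab[of True]
    by (intro Un_least Orb_subset_L) (simp_all add: spacing_def)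
qed

end

theorem lemma5p6:
  fixes n a b :: nat
  assumes "n \<ge> 2" and "(a, b) \<in> Omega n"
  defines "L \<equiv> Lab n a b"
  shows "(Orb L (qpow (omega n) a) = Orb L qone \<longleftrightarrow> odd (n div a))
    \<and> (Orb L (qmult (qpow (omega n) b) qj) = Orb L qj \<longleftrightarrow> odd (n div b))
    \<and> L = Orb L qone \<union> Orb L (qpow (omega n) a) \<union> Orb L qj \<union> Orb L (qmult (qpow (omega n) b) qj)
    \<and> card {Orb L qone, Orb L (qpow (omega n) a), Orb L qj, Orb L (qmult (qpow (omega n) b) qj)}
        \<in> {2, 3, 4}"
proof -
  interpret Lab_orbits n a b
    using assms by unfold_locales (auto simp: Omega_def)
  have "Orb (Lab n a b) (dic n False a) = Orb (Lab n a b) (dic n False 0) \<longleftrightarrow> odd (n div a)"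
    using Orb_dic_spacing_eq_iff[of False] by (simp add: spacing_def)
  moreover have "Orb (Lab n a b) (dic n True b) = Orb (Lab n a b) (dic n True 0) \<longleftrightarrow> odd (n div b)"
    using Orb_dic_spacing_eq_iff[of True] by (simp add: spacing_def)
  moreover have "card {Orb (Lab n a b) (dic n False 0), Orb (Lab n a b) (dic n False a),
      Orb (Lab n a b) (dic n True 0), Orb (Lab n a b) (dic n True b)} \<in> {2, 3, 4}"
    by (rule card_two_pairs) (auto simp: Orb_dic_neq)
  ultimately show ?thesis
    unfolding L_def generators_eq_dic(4) unfolding generators_eq_dic(1-3)[where n = n]
    using Lab_eq_Un_Orb by (intro conjI) assumption+
qed

end
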